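(* Let the configuration space be $\mathbb{R}^n$ with each coordinate an independent double integrator $\ddot q_i=a_i$, $a_i\in[-1,1]$. Let $\tau$ be a piecewise-linear path in $\mathcal{C}_{free}$ from $q_I$ to $q_G$, with vertices $q_I=p_0,p_1,\dots,p_k=q_G$. Let $a(\cdot)$ be the bang-bang transform of $\tau$ and $x_I=(q_I,\mathbf{0})$, $x_G=(q_G,\mathbf{0})$. Then the bang-bang transform is time-optimal (for each edge, its control is a fastest control that keeps the configuration on that edge and steers from rest at one vertex to rest at the next); furthermore, the trajectory from $x_I$ under $a(\cdot)$ reaches $x_G$, and it is collision free, i.e., lies in $X_{free}=\{(q,\dot q): q\in\mathcal{C}_{free}\}$.
   Context: $\mathcal{C}_{free}$ is the open set of collision-free configurations. Bang-bang transform: for each edge from $q=p_{j-1}$ to $q'=p_j$, let $v=q'-q$, $\hat v=v/\|v\|$, $s=\max_i|\hat v_i|$, acceleration vector $a=\hat v/s$ and $t=\sqrt{s\|v\|}$; the edge control is $((a,t),(-a,t))$, i.e., apply $a$ for time $t$ and then $-a$ for time $t$. The controls of all edges are concatenated in order. *)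

theory Defs
  imports "HOL-Analysis.Analysis"
begin

text \<open>A control segment list: pairs (acceleration, duration), applied in order.\<close>
type_synonym 'n ctrl = "((real^'n) \<times> real) list"

fun ctrl_fun :: "'n ctrl \<Rightarrow> real \<Rightarrow> real^'n" where
  "ctrl_fun [] t = 0"
| "ctrl_fun ((a, d) # rest) t = (if t < d then a else ctrl_fun rest (t - d))"

definition ctrl_dur :: "'n ctrl \<Rightarrow> real" where
  "ctrl_dur c = sum_list (map snd c)"

definition admissible :: "(real \<Rightarrow> real^'n) \<Rightarrow> real \<Rightarrow> bool" where
  "admissible u T \<longleftrightarrow> (\<forall>t\<in>{0..T}. \<forall>i. \<bar>u t $ i\<bar> \<le> 1)"

text \<open>(q, w) is a (Caratheodory) trajectory of the double integrator under control u
on [0,T]: q' = w and w(t) = w(0) + integral of u over [0,t].\<close>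
definition is_traj ::
  "(real \<Rightarrow> real^'n) \<Rightarrow> real \<Rightarrow> (real \<Rightarrow> real^'n) \<Rightarrow> (real \<Rightarrow> real^'n) \<Rightarrow> bool" where
  "is_traj u T q w \<longleftrightarrow>
     (\<forall>t\<in>{0..T}. (q has_vector_derivative w t) (at t within {0..T})
                 \<and> (u has_integral (w t - w 0)) {0..t})"

definition steers ::
  "(real \<Rightarrow> real^'n) \<Rightarrow> real \<Rightarrow> real^'n \<Rightarrow> real^'n \<Rightarrow> (real^'n) set \<Rightarrow> bool" where
  "steers u T q0 q1 S \<longleftrightarrow>
     (\<exists>q w. is_traj u T q w \<and> q 0 = q0 \<and> w 0 = 0 \<and> q T = q1 \<and> w T = 0
            \<and> (\<forall>t\<in>{0..T}. q t \<in> S))"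

definition time_optimal_edge :: "'n ctrl \<Rightarrow> real^'n \<Rightarrow> real^'n \<Rightarrow> bool" where
  "time_optimal_edge c q q' \<longleftrightarrow>
     admissible (ctrl_fun c) (ctrl_dur c)
     \<and> steers (ctrl_fun c) (ctrl_dur c) q q' (closed_segment q q')
     \<and> (\<forall>u T. 0 \<le> T \<longrightarrow> admissible u T \<longrightarrow> steers u T q q' (closed_segment q q')
               \<longrightarrow> ctrl_dur c \<le> T)"

definition bb_edge :: "real^'n \<Rightarrow> real^'n \<Rightarrow> 'n ctrl" where
  "bb_edge q q' =
     (let v = q' - q;
          vh = v /\<^sub>R norm v;
          s = Max (range (\<lambda>i. \<bar>vh $ i\<bar>));
          a = vh /\<^sub>R s;
          t = sqrt (s * norm v)
      in [(a, t), (- a, t)])"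

definition bang_bang :: "(nat \<Rightarrow> real^'n) \<Rightarrow> nat \<Rightarrow> 'n ctrl" where
  "bang_bang p k = concat (map (\<lambda>j. bb_edge (p (j - 1)) (p j)) [1..<k+1])"

definition Xfree :: "(real^'n) set \<Rightarrow> ((real^'n) \<times> (real^'n)) set" where
  "Xfree Cfree = {(q, qd). q \<in> Cfree}"

end

theory Submission
  imports Defs
begin

text \<open>On an edge from q to q' the bang-bang control accelerates with a for time t and then
decelerates with -a for time t, where t^2 a = q' - q. The position is q + (s^2/2) a during the
first phase and q' - ((2t - s)^2/2) a during the second, so it moves along the segment and comes
to rest at q'. Since a is q' - q rescaled so that its largest component is 1 in absolute value,
some coordinate i has |q'_i - q_i| = t^2. For any admissible control steering from rest to rest
in time T, the i-th velocity at time s is bounded by both s and T - s, so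
|q'_i - q_i| <= T^2/4, i.e. 2t <= T. Concatenating the edge controls, the trajectory reaches each
vertex at rest and never leaves the polygonal path, which lies in C_free.\<close>

lemma ctrl_dur_append: "ctrl_dur (c1 @ c2) = ctrl_dur c1 + ctrl_dur c2"
  unfolding ctrl_dur_def by simp

lemma ctrl_dur_nonneg: "(\<And>x. x \<in> set c \<Longrightarrow> 0 \<le> snd x) \<Longrightarrow> 0 \<le> ctrl_dur c"
  unfolding ctrl_dur_def by (auto intro!: sum_list_nonneg)

lemma ctrl_fun_append:
  assumes "\<And>x. x \<in> set c1 \<Longrightarrow> 0 \<le> snd x" and "0 \<le> t"
  shows "ctrl_fun (c1 @ c2) t =
    (if t < ctrl_dur c1 then ctrl_fun c1 t else ctrl_fun c2 (t - ctrl_dur c1))"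
  using assms
proof (induction c1 arbitrary: t)
  case Nil
  then show ?case by (simp add: ctrl_dur_def)
next
  case (Cons x c1)
  obtain a d where x: "x = (a, d)" by force
  have "0 \<le> ctrl_dur c1"
    using Cons.prems(1) by (intro ctrl_dur_nonneg) auto
  then show ?case
    using Cons x by (auto simp: ctrl_dur_def algebra_simps)
qed

lemma has_integral_shift_real:
  fixes f :: "real \<Rightarrow> 'b::real_normed_vector"
  assumes "(f has_integral i) {a..b}"
  shows "((\<lambda>x. f (x + c)) has_integral i) {a - c..b - c}"
  using has_integral_affinity'[of f i a b 1 c] assms by simp

lemma has_integral_interval_diff:
  fixes f :: "real \<Rightarrow> 'a::banach"
  assumes I: "(f has_integral I) {a..s}" and J: "(f has_integral J) {a..t}"
    and "a \<le> s" "s \<le> t"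
  shows "(f has_integral (J - I)) {s..t}"
proof -
  have "f integrable_on {s..t}"
    using integrable_subinterval_real[OF has_integral_integrable[OF J]] \<open>a \<le> s\<close> by auto
  then obtain K where K: "(f has_integral K) {s..t}" by blast
  have "(f has_integral (I + K)) {a..t}"
    using has_integral_combine[OF assms(3,4) I K] .
  then have "K = J - I"
    using has_integral_unique[OF J] by (simp add: algebra_simps)
  with K show ?thesis by simp
qed

lemma ctrl_fun_integrable_on: "ctrl_fun c integrable_on {x..y}"
proof (induction c arbitrary: x y)
  case Nil
  then show ?case by (simp add: integrable_0)
next
  case (Cons p c)
  obtain a d where p: "p = (a, d)" by force
  have before: "ctrl_fun (p # c) integrable_on {x..y}" if "y \<le> d" for x y
    by (rule integrable_spike_finite[of "{d}" _ _ "\<lambda>_. a"]) (use that p in auto)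
  have after: "ctrl_fun (p # c) integrable_on {x..y}" if "d \<le> x" for x y
  proof -
    have shifted: "(\<lambda>s. ctrl_fun c (s - d)) integrable_on {x..y}"
      using has_integral_shift_real[of "ctrl_fun c" _ "x - d" "y - d" "-d"] Cons.IH[of "x - d" "y - d"]
      by auto
    show ?thesis
      by (rule integrable_spike_finite[of "{}" _ _ "\<lambda>s. ctrl_fun c (s - d)"])
        (use that p shifted in auto)
  qed
  show ?case
  proof (cases "y \<le> d \<or> d \<le> x")
    case True
    then show ?thesis using before after by blast
  next
    case False
    then have "x \<le> d" "d \<le> y" by auto
    moreover have "ctrl_fun (p # c) integrable_on {x..d}" by (rule before) simp
    moreover have "ctrl_fun (p # c) integrable_on {d..y}" by (rule after) simp
    ultimately show ?thesis
      by (rule Henstock_Kurzweil_Integration.integrable_combine)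
  qed
qed

lemma is_traj_exists: "\<exists>q w. is_traj (ctrl_fun c) T q w \<and> q 0 = q0 \<and> w 0 = 0"
proof -
  define w where "w t = integral {0..t} (ctrl_fun c)" for t
  define q where "q t = q0 + integral {0..t} w" for t
  have "continuous_on {0..T} w"
    unfolding w_def by (rule indefinite_integral_continuous_1[OF ctrl_fun_integrable_on])
  then have "is_traj (ctrl_fun c) T q w"
    unfolding is_traj_def q_def w_def
    by (auto intro!: derivative_eq_intros integral_has_vector_derivative ctrl_fun_integrable_on)
  moreover have "q 0 = q0" "w 0 = 0"
    unfolding q_def w_def by simp_all
  ultimately show ?thesis by blast
qed

lemma is_traj_append_prefix:
  assumes nonneg: "\<And>x. x \<in> set c1 \<Longrightarrow> 0 \<le> snd x" and "0 \<le> ctrl_dur c2"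
    and traj: "is_traj (ctrl_fun (c1 @ c2)) (ctrl_dur c1 + ctrl_dur c2) q w"
  shows "is_traj (ctrl_fun c1) (ctrl_dur c1) q w"
  unfolding is_traj_def
proof (intro ballI conjI)
  fix t assume t: "t \<in> {0..ctrl_dur c1}"
  then have t': "t \<in> {0..ctrl_dur c1 + ctrl_dur c2}" using \<open>0 \<le> ctrl_dur c2\<close> by auto
  have "(q has_vector_derivative w t) (at t within {0..ctrl_dur c1 + ctrl_dur c2})"
    using traj t' unfolding is_traj_def by blast
  then show "(q has_vector_derivative w t) (at t within {0..ctrl_dur c1})"
    by (rule has_vector_derivative_within_subset) (use \<open>0 \<le> ctrl_dur c2\<close> in auto)
  have "(ctrl_fun (c1 @ c2) has_integral (w t - w 0)) {0..t}"
    using traj t' unfolding is_traj_def by blast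
  then show "(ctrl_fun c1 has_integral (w t - w 0)) {0..t}"
    by (rule has_integral_spike_finite[of "{ctrl_dur c1}", rotated 2])
      (use t ctrl_fun_append[OF nonneg] in auto)
qed

lemma is_traj_append_suffix:
  assumes nonneg: "\<And>x. x \<in> set c1 \<Longrightarrow> 0 \<le> snd x" and "0 \<le> ctrl_dur c2"
    and traj: "is_traj (ctrl_fun (c1 @ c2)) (ctrl_dur c1 + ctrl_dur c2) q w"
  shows "is_traj (ctrl_fun c2) (ctrl_dur c2) (\<lambda>s. q (ctrl_dur c1 + s)) (\<lambda>s. w (ctrl_dur c1 + s))"
proof -
  define D1 D2 where "D1 = ctrl_dur c1" and "D2 = ctrl_dur c2"
  define u where "u = ctrl_fun (c1 @ c2)"
  have "0 \<le> D1" "0 \<le> D2"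
    unfolding D1_def D2_def using ctrl_dur_nonneg[OF nonneg] \<open>0 \<le> ctrl_dur c2\<close> by auto
  have deriv: "(q has_vector_derivative w t) (at t within {0..D1 + D2})"
    and integral: "(u has_integral (w t - w 0)) {0..t}" if "t \<in> {0..D1 + D2}" for t
    using traj that unfolding is_traj_def D1_def D2_def u_def by blast+
  show ?thesis
    unfolding is_traj_def D1_def[symmetric] D2_def[symmetric]
  proof (intro ballI conjI)
    fix s assume s: "s \<in> {0..D2}"
    then have s': "D1 + s \<in> {0..D1 + D2}" using \<open>0 \<le> D1\<close> by auto
    have shift: "((\<lambda>s. D1 + s) has_vector_derivative 1) (at s within {0..D2})"
      by (auto intro!: derivative_eq_intros)
    have "(q has_vector_derivative w (D1 + s)) (at (D1 + s) within (\<lambda>s. D1 + s) ` {0..D2})"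
      by (rule has_vector_derivative_within_subset[OF deriv[OF s']]) (use \<open>0 \<le> D1\<close> in auto)
    from vector_diff_chain_within[OF shift this]
    show "((\<lambda>s. q (D1 + s)) has_vector_derivative w (D1 + s)) (at s within {0..D2})"
      by (simp add: o_def)
    have D1: "D1 \<in> {0..D1 + D2}" using \<open>0 \<le> D1\<close> \<open>0 \<le> D2\<close> by auto
    have "(u has_integral (w (D1 + s) - w D1)) {D1..D1 + s}"
      using has_integral_interval_diff[OF integral[OF D1] integral[OF s']] \<open>0 \<le> D1\<close> s by auto
    then have "((\<lambda>x. u (x + D1)) has_integral (w (D1 + s) - w D1)) {0..s}"
      using has_integral_shift_real[of u _ D1 "D1 + s" D1] by simp
    then show "(ctrl_fun c2 has_integral (w (D1 + s) - w (D1 + 0))) {0..s}"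
      unfolding add_0_right
      by (rule has_integral_spike_finite[of "{}", rotated 2])
        (use \<open>0 \<le> D1\<close> ctrl_fun_append[OF nonneg] in \<open>auto simp: u_def D1_def\<close>)
  qed
qed

lemma is_traj_constant:
  assumes traj: "is_traj (ctrl_fun [(a, d)]) d q w" and s: "s \<in> {0..d}"
  shows "w s = w 0 + s *\<^sub>R a" and "q s = q 0 + s *\<^sub>R w 0 + (s^2 / 2) *\<^sub>R a"
proof -
  have velocity: "w x = w 0 + x *\<^sub>R a" if x: "x \<in> {0..d}" for x
  proof -
    have "(ctrl_fun [(a, d)] has_integral (w x - w 0)) {0..x}"
      using traj x unfolding is_traj_def by blast
    then have "((\<lambda>_. a) has_integral (w x - w 0)) {0..x}"
      by (rule has_integral_spike_finite[of "{d}", rotated 2]) (use x in auto)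
    moreover have "((\<lambda>_. a) has_integral (x *\<^sub>R a)) {0..x}"
      using has_integral_const_real[of a 0 x] x by simp
    ultimately have "w x - w 0 = x *\<^sub>R a"
      by (rule has_integral_unique)
    then show ?thesis by (simp add: algebra_simps)
  qed
  then show "w s = w 0 + s *\<^sub>R a" using s .
  define F where "F x = q x - (x *\<^sub>R w 0 + (x^2 / 2) *\<^sub>R a)" for x
  have "(F has_vector_derivative 0) (at x within {0..d})" if x: "x \<in> {0..d}" for x
  proof -
    have "(q has_vector_derivative w x) (at x within {0..d})"
      using traj x unfolding is_traj_def by blast
    then have "(F has_vector_derivative w x - (w 0 + x *\<^sub>R a)) (at x within {0..d})"
      unfolding F_def by (auto intro!: derivative_eq_intros)
    with velocity[OF x] show ?thesis by simp
  qed
  then have "F s = F 0"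
    using has_vector_derivative_zero_constant[of "{0..d}" F] s by fastforce
  then show "q s = q 0 + s *\<^sub>R w 0 + (s^2 / 2) *\<^sub>R a"
    unfolding F_def by (simp add: algebra_simps)
qed

lemma is_traj_velocity_component_bound:
  assumes "admissible u T" and traj: "is_traj u T q w" and "0 \<le> s" "s \<le> t" "t \<le> T"
  shows "\<bar>w t $ i - w s $ i\<bar> \<le> t - s"
proof -
  have "(u has_integral (w s - w 0)) {0..s}" "(u has_integral (w t - w 0)) {0..t}"
    using traj assms(3-5) unfolding is_traj_def by auto
  then have "(u has_integral (w t - w 0) - (w s - w 0)) {s..t}"
    using has_integral_interval_diff assms(3,4) by blast
  then have "(((\<lambda>x. x $ i) \<circ> u) has_integral ((w t - w s) $ i)) {s..t}"
    by (intro has_integral_linear bounded_linear_vec_nth) simp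
  then have component: "((\<lambda>x. u x $ i) has_integral (w t $ i - w s $ i)) {s..t}"
    by (simp add: o_def)
  have bounded: "norm (u x $ i) \<le> 1" if "x \<in> {s..t} - {}" for x
    using \<open>admissible u T\<close> that assms(3,5) unfolding admissible_def by auto
  show ?thesis
    using has_integral_bound_real[OF zero_le_one finite.emptyI component bounded] assms(4) by simp
qed

lemma DERIV_nonpos_imp_nonincreasing_within:
  fixes f :: "real \<Rightarrow> real"
  assumes "a \<le> b"
    and "\<And>x. x \<in> {a..b} \<Longrightarrow> (f has_real_derivative f' x) (at x within {a..b})"
    and "\<And>x. x \<in> {a..b} \<Longrightarrow> f' x \<le> 0"
  shows "f b \<le> f a"
proof -
  obtain x where "x \<in> {a..b}" "f b - f a = f' x * (b - a)"
    using mvt_very_simple[of a b f "\<lambda>x h. f' x * h"] assms(1,2)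
    by (auto simp: has_field_derivative_def)
  with assms(1,3) show ?thesis
    by (metis diff_ge_0_iff_ge le_iff_diff_le_0 mult_nonpos_nonneg)
qed

lemma displacement_le_quarter_square:
  fixes f g :: "real \<Rightarrow> real"
  assumes "0 \<le> T"
    and deriv: "\<And>t. t \<in> {0..T} \<Longrightarrow> (f has_real_derivative g t) (at t within {0..T})"
    and from_start: "\<And>t. t \<in> {0..T} \<Longrightarrow> g t \<le> t"
    and to_end: "\<And>t. t \<in> {0..T} \<Longrightarrow> g t \<le> T - t"
  shows "f T - f 0 \<le> T^2 / 4"
proof -
  have deriv_sub: "(f has_real_derivative g x) (at x within S)" if "x \<in> S" "S \<subseteq> {0..T}" for x S
    using DERIV_subset[OF deriv] that by blast
  have "f (T/2) - (T/2)^2/2 \<le> f 0 - 0^2/2"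
  proof (rule DERIV_nonpos_imp_nonincreasing_within
      [where f = "\<lambda>t. f t - t^2/2" and f' = "\<lambda>t. g t - t"])
    fix x assume x: "x \<in> {0..T/2}"
    then show "((\<lambda>t. f t - t^2/2) has_real_derivative g x - x) (at x within {0..T/2})"
      by (auto intro!: derivative_eq_intros deriv_sub)
    show "g x - x \<le> 0" using from_start x by auto
  qed (use \<open>0 \<le> T\<close> in auto)
  moreover have "f T - (T * T - T^2/2) \<le> f (T/2) - (T * (T/2) - (T/2)^2/2)"
  proof (rule DERIV_nonpos_imp_nonincreasing_within
      [where f = "\<lambda>t. f t - (T * t - t^2/2)" and f' = "\<lambda>t. g t - (T - t)"])
    fix x assume x: "x \<in> {T/2..T}"
    then show "((\<lambda>t. f t - (T * t - t^2/2)) has_real_derivative g x - (T - x))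
        (at x within {T/2..T})"
      using \<open>0 \<le> T\<close> by (auto intro!: derivative_eq_intros deriv_sub)
    show "g x - (T - x) \<le> 0" using to_end x \<open>0 \<le> T\<close> by auto
  qed (use \<open>0 \<le> T\<close> in auto)
  ultimately show ?thesis
    by (simp add: power2_eq_square field_simps)
qed

lemma steers_component_displacement_le:
  assumes "admissible u T" and "0 \<le> T" and "steers u T q0 q1 S"
  shows "\<bar>(q1 - q0) $ i\<bar> \<le> T^2 / 4"
proof -
  obtain q w where traj: "is_traj u T q w"
    and ends: "q 0 = q0" "w 0 = 0" "q T = q1" "w T = 0"
    using assms(3) unfolding steers_def by blast
  have speed_bounds: "w t $ i \<le> t" "- w t $ i \<le> t" "w t $ i \<le> T - t" "- w t $ i \<le> T - t"
    if "t \<in> {0..T}" for t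
    using is_traj_velocity_component_bound[OF assms(1) traj, of 0 t i]
      is_traj_velocity_component_bound[OF assms(1) traj, of t T i] that ends
    by (auto simp: abs_le_iff)
  have deriv: "((\<lambda>t. q t $ i) has_real_derivative w t $ i) (at t within {0..T})"
    if "t \<in> {0..T}" for t
  proof -
    have "(q has_vector_derivative w t) (at t within {0..T})"
      using traj that unfolding is_traj_def by blast
    from bounded_linear.has_vector_derivative[OF bounded_linear_vec_nth this]
    show ?thesis by (simp add: has_real_derivative_iff_has_vector_derivative)
  qed
  have "q T $ i - q 0 $ i \<le> T^2 / 4"
    by (rule displacement_le_quarter_square[OF assms(2) deriv]) (use speed_bounds in auto)
  moreover have "- q T $ i - - q 0 $ i \<le> T^2 / 4"
    by (rule displacement_le_quarter_square[OF assms(2) DERIV_minus[OF deriv]])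
      (use speed_bounds in auto)
  ultimately show ?thesis
    unfolding abs_le_iff using ends by auto
qed

lemma bb_edgeE:
  fixes q q' :: "real^'n"
  assumes "q \<noteq> q'"
  obtains a t where "bb_edge q q' = [(a, t), (-a, t)]" and "0 < t" and "t^2 *\<^sub>R a = q' - q"
    and "\<forall>i. \<bar>a $ i\<bar> \<le> 1" and "\<exists>i. \<bar>a $ i\<bar> = 1"
proof -
  define v where "v = q' - q"
  define vh where "vh = v /\<^sub>R norm v"
  define s where "s = Max (range (\<lambda>i. \<bar>vh $ i\<bar>))"
  have "0 < norm v" using assms unfolding v_def by simp
  have "s \<in> range (\<lambda>i. \<bar>vh $ i\<bar>)"
    unfolding s_def by (rule Max_in) simp_all
  then obtain i0 where i0: "s = \<bar>vh $ i0\<bar>" by blast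
  have le_s: "\<bar>vh $ i\<bar> \<le> s" for i
    unfolding s_def by (rule Max_ge) simp_all
  have "vh \<noteq> 0" unfolding vh_def v_def using assms by simp
  then obtain j where "vh $ j \<noteq> 0" by (metis vec_eq_iff zero_index)
  with le_s[of j] have "0 < s" by linarith
  show ?thesis
  proof
    show "bb_edge q q' = [(vh /\<^sub>R s, sqrt (s * norm v)), (- (vh /\<^sub>R s), sqrt (s * norm v))]"
      unfolding bb_edge_def Let_def s_def vh_def v_def ..
    show "0 < sqrt (s * norm v)"
      using \<open>0 < s\<close> \<open>0 < norm v\<close> by simp
    show "(sqrt (s * norm v))^2 *\<^sub>R (vh /\<^sub>R s) = q' - q"
      using \<open>0 < s\<close> \<open>0 < norm v\<close> unfolding vh_def v_def by (simp add: field_simps)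
    show "\<forall>i. \<bar>(vh /\<^sub>R s) $ i\<bar> \<le> 1"
      using le_s \<open>0 < s\<close> by (simp add: field_simps)
    show "\<exists>i. \<bar>(vh /\<^sub>R s) $ i\<bar> = 1"
      using i0 \<open>0 < s\<close> by (intro exI[of _ i0]) (simp add: abs_mult)
  qed
qed

lemma add_scaleR_diff_in_closed_segment:
  fixes a b :: "'a::real_vector"
  assumes "0 \<le> \<mu>" and "\<mu> \<le> 1"
  shows "a + \<mu> *\<^sub>R (b - a) \<in> closed_segment a b"
  unfolding in_segment using assms by (auto intro!: exI[of _ \<mu>] simp: algebra_simps)

lemma bang_bang_pair_motion:
  assumes "0 \<le> t" and traj: "is_traj (ctrl_fun [(a, t), (-a, t)]) (t + t) q w" and "w 0 = 0"
  shows "\<And>s. s \<in> {0..t} \<Longrightarrow> q s = q 0 + (s^2 / 2) *\<^sub>R a"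
    and "\<And>r. r \<in> {0..t} \<Longrightarrow> q (t + r) = q 0 + (t^2 - (t - r)^2 / 2) *\<^sub>R a"
    and "w (t + t) = 0"
proof -
  have dur: "ctrl_dur [(a, t)] = t" "ctrl_dur [(-a, t)] = t"
    by (simp_all add: ctrl_dur_def)
  have accel: "is_traj (ctrl_fun [(a, t)]) t q w"
    using is_traj_append_prefix[of "[(a, t)]" "[(-a, t)]" q w] traj \<open>0 \<le> t\<close>
    unfolding dur by auto
  have decel: "is_traj (ctrl_fun [(-a, t)]) t (\<lambda>s. q (t + s)) (\<lambda>s. w (t + s))"
    using is_traj_append_suffix[of "[(a, t)]" "[(-a, t)]" q w] traj \<open>0 \<le> t\<close>
    unfolding dur by auto
  show first: "q s = q 0 + (s^2 / 2) *\<^sub>R a" if "s \<in> {0..t}" for s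
    using is_traj_constant(2)[OF accel that] \<open>w 0 = 0\<close> by simp
  have "t \<in> {0..t}" using \<open>0 \<le> t\<close> by simp
  note at_switch = is_traj_constant[OF accel this]
  show "w (t + t) = 0"
    using is_traj_constant(1)[OF decel \<open>t \<in> {0..t}\<close>] at_switch(1) \<open>w 0 = 0\<close> by simp
  fix r assume "r \<in> {0..t}"
  have "q (t + r) = q 0 + (t^2 / 2 + r * t - r^2 / 2) *\<^sub>R a"
    using is_traj_constant(2)[OF decel \<open>r \<in> {0..t}\<close>] at_switch \<open>w 0 = 0\<close>
    by (simp add: algebra_simps)
  also have "t^2 / 2 + r * t - r^2 / 2 = t^2 - (t - r)^2 / 2"
    by (simp add: power2_eq_square field_simps)
  finally show "q (t + r) = q 0 + (t^2 - (t - r)^2 / 2) *\<^sub>R a" .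
qed

lemma bang_bang_pair_traj:
  assumes "0 < t" and disp: "t^2 *\<^sub>R a = q1 - q0"
    and traj: "is_traj (ctrl_fun [(a, t), (-a, t)]) (t + t) q w" and "q 0 = q0" "w 0 = 0"
  shows "q (t + t) = q1" and "w (t + t) = 0"
    and "\<And>s. s \<in> {0..t + t} \<Longrightarrow> q s \<in> closed_segment q0 q1"
proof -
  note motion = bang_bang_pair_motion[OF less_imp_le[OF \<open>0 < t\<close>] traj \<open>w 0 = 0\<close>,
      unfolded \<open>q 0 = q0\<close>]
  show "q (t + t) = q1" "w (t + t) = 0"
    using motion(2)[of t] motion(3) \<open>0 < t\<close> disp by auto
  have on_segment: "q0 + c *\<^sub>R a \<in> closed_segment q0 q1" if "0 \<le> c" "c \<le> t^2" for c
  proof -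
    have "q0 + c *\<^sub>R a = q0 + (c / t^2) *\<^sub>R (q1 - q0)"
      using \<open>0 < t\<close> by (simp add: disp[symmetric])
    then show ?thesis
      using that \<open>0 < t\<close> by (simp add: add_scaleR_diff_in_closed_segment)
  qed
  fix s assume s: "s \<in> {0..t + t}"
  show "q s \<in> closed_segment q0 q1"
  proof (cases "s \<le> t")
    case True
    then have "s^2 \<le> t^2" using s by (simp add: power_mono)
    then have "s^2 / 2 \<le> t^2" using zero_le_power2[of t] by linarith
    then show ?thesis
      using motion(1)[of s] on_segment[of "s^2 / 2"] s True by simp
  next
    case False
    then have "(t - (s - t))^2 \<le> t^2" using s by (simp add: power_mono)
    then have "0 \<le> t^2 - (t - (s - t))^2 / 2" "t^2 - (t - (s - t))^2 / 2 \<le> t^2"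
      using zero_le_power2[of "t - (s - t)"] by linarith+
    then show ?thesis
      using motion(2)[of "s - t"] on_segment s False by simp
  qed
qed

lemma admissible_bang_bang_pair:
  assumes "\<forall>i. \<bar>a $ i\<bar> \<le> 1"
  shows "admissible (ctrl_fun [(a, t), (-a, t)]) T"
  using assms unfolding admissible_def by auto

lemma bb_edge_time_optimal:
  assumes "q \<noteq> q'"
  shows "time_optimal_edge (bb_edge q q') q q'"
proof -
  obtain a t where edge: "bb_edge q q' = [(a, t), (-a, t)]" and "0 < t"
    and disp: "t^2 *\<^sub>R a = q' - q" and bounded: "\<forall>i. \<bar>a $ i\<bar> \<le> 1"
    and saturated: "\<exists>i. \<bar>a $ i\<bar> = 1"
    using bb_edgeE[OF assms] by blast
  have dur: "ctrl_dur [(a, t), (-a, t)] = t + t"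
    by (simp add: ctrl_dur_def)
  obtain x w where traj: "is_traj (ctrl_fun [(a, t), (-a, t)]) (t + t) x w"
    and start: "x 0 = q" "w 0 = 0"
    using is_traj_exists by blast
  have "steers (ctrl_fun [(a, t), (-a, t)]) (t + t) q q' (closed_segment q q')"
    unfolding steers_def using bang_bang_pair_traj[OF \<open>0 < t\<close> disp traj start] traj start by blast
  moreover have "t + t \<le> T"
    if "0 \<le> T" "admissible u T" "steers u T q q' (closed_segment q q')" for u T
  proof -
    obtain i where "\<bar>a $ i\<bar> = 1" using saturated by blast
    then have "t^2 = \<bar>(q' - q) $ i\<bar>"
      by (simp add: disp[symmetric] abs_mult)
    also have "\<dots> \<le> T^2 / 4"
      using steers_component_displacement_le[OF that(2,1,3)] .
    finally have "(t + t)^2 \<le> T^2"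
      by (simp add: power2_eq_square algebra_simps)
    then show ?thesis
      using \<open>0 \<le> T\<close> by (rule power2_le_imp_le)
  qed
  ultimately show ?thesis
    unfolding time_optimal_edge_def edge dur using admissible_bang_bang_pair[OF bounded] by blast
qed

lemma bang_bang_Suc: "bang_bang p (Suc k) = bang_bang p k @ bb_edge (p k) (p (Suc k))"
  unfolding bang_bang_def by simp

lemma bb_edge_durations_nonneg:
  assumes "x \<in> set (bb_edge q q')"
  shows "0 \<le> snd x"
proof -
  have "0 \<le> Max (range (\<lambda>i. \<bar>((q' - q) /\<^sub>R norm (q' - q)) $ i\<bar>))"
    by (rule order.trans[OF abs_ge_zero Max_ge]) auto
  with assms show ?thesis
    unfolding bb_edge_def Let_def by auto
qed

lemma bang_bang_durations_nonneg: "x \<in> set (bang_bang p k) \<Longrightarrow> 0 \<le> snd x"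
  unfolding bang_bang_def by (force dest: bb_edge_durations_nonneg)

lemma bang_bang_traj:
  assumes "\<forall>j\<in>{1..k}. p (j - 1) \<noteq> p j"
    and "\<forall>j\<in>{1..k}. closed_segment (p (j - 1)) (p j) \<subseteq> C" and "p 0 \<in> C"
    and "is_traj (ctrl_fun (bang_bang p k)) (ctrl_dur (bang_bang p k)) q w"
    and "q 0 = p 0" and "w 0 = 0"
  shows "q (ctrl_dur (bang_bang p k)) = p k \<and> w (ctrl_dur (bang_bang p k)) = 0
    \<and> (\<forall>t\<in>{0..ctrl_dur (bang_bang p k)}. q t \<in> C)"
  using assms(1,2,4)
proof (induction k)
  case 0
  then show ?case
    using assms(3-6) by (simp add: bang_bang_def ctrl_dur_def)
next
  case (Suc k)
  have "p k \<noteq> p (Suc k)" and segment: "closed_segment (p k) (p (Suc k)) \<subseteq> C"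
    using Suc.prems(1,2)[THEN bspec, of "Suc k"] by simp_all
  then obtain a t where edge: "bb_edge (p k) (p (Suc k)) = [(a, t), (-a, t)]"
    and "0 < t" and disp: "t^2 *\<^sub>R a = p (Suc k) - p k"
    using bb_edgeE by metis
  define D where "D = ctrl_dur (bang_bang p k)"
  have edge_dur: "ctrl_dur [(a, t), (-a, t)] = t + t"
    by (simp add: ctrl_dur_def)
  have dur: "ctrl_dur (bang_bang p (Suc k)) = D + (t + t)"
    unfolding bang_bang_Suc edge ctrl_dur_append D_def edge_dur ..
  have traj: "is_traj (ctrl_fun (bang_bang p k @ [(a, t), (-a, t)]))
      (ctrl_dur (bang_bang p k) + ctrl_dur [(a, t), (-a, t)]) q w"
    using Suc.prems(3) unfolding bang_bang_Suc edge ctrl_dur_append .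
  have edge_nonneg: "0 \<le> ctrl_dur [(a, t), (-a, t)]"
    using \<open>0 < t\<close> edge_dur by simp
  have prefix_traj: "is_traj (ctrl_fun (bang_bang p k)) (ctrl_dur (bang_bang p k)) q w"
    using is_traj_append_prefix[OF _ edge_nonneg traj] bang_bang_durations_nonneg by blast
  have last_edge: "is_traj (ctrl_fun [(a, t), (-a, t)]) (t + t) (\<lambda>s. q (D + s)) (\<lambda>s. w (D + s))"
    using is_traj_append_suffix[OF _ edge_nonneg traj] bang_bang_durations_nonneg
    unfolding D_def edge_dur by blast
  have prefix: "q D = p k \<and> w D = 0 \<and> (\<forall>s\<in>{0..D}. q s \<in> C)"
    using Suc.IH[OF _ _ prefix_traj] Suc.prems(1,2) unfolding D_def by auto
  note last_edge_end = bang_bang_pair_traj[OF \<open>0 < t\<close> disp last_edge]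
  have in_C: "q s \<in> C" if "s \<in> {0..D + (t + t)}" for s
  proof (cases "s \<le> D")
    case True
    then show ?thesis using prefix that by auto
  next
    case False
    then have "q (D + (s - D)) \<in> closed_segment (p k) (p (Suc k))"
      using last_edge_end(3)[of "s - D"] prefix that False by auto
    then show ?thesis using segment by auto
  qed
  have ends: "q (D + (t + t)) = p (Suc k)" "w (D + (t + t)) = 0"
    using last_edge_end(1,2) prefix by simp_all
  show ?case
    unfolding dur using ends in_C by simp
qed

theorem proposition5:
  fixes Cfree :: "(real^'n) set" and p :: "nat \<Rightarrow> real^'n" and k :: nat
    and qI qG :: "real^'n"
  assumes "open Cfree"
    and "p 0 = qI" and "p k = qG"
    and "\<forall>j\<le>k. p j \<in> Cfree"
    and "\<forall>j\<in>{1..k}. closed_segment (p (j - 1)) (p j) \<subseteq> Cfree"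
    and "\<forall>j\<in>{1..k}. p (j - 1) \<noteq> p j"
  shows "(\<forall>j\<in>{1..k}. time_optimal_edge (bb_edge (p (j - 1)) (p j)) (p (j - 1)) (p j))
    \<and> (let u = ctrl_fun (bang_bang p k); T = ctrl_dur (bang_bang p k) in
         (\<exists>q w. is_traj u T q w \<and> q 0 = qI \<and> w 0 = 0)
       \<and> (\<forall>q w. is_traj u T q w \<and> q 0 = qI \<and> w 0 = 0 \<longrightarrow>
            q T = qG \<and> w T = 0 \<and> (\<forall>t\<in>{0..T}. (q t, w t) \<in> Xfree Cfree)))"
proof -
  have "q (ctrl_dur (bang_bang p k)) = qG \<and> w (ctrl_dur (bang_bang p k)) = 0
      \<and> (\<forall>t\<in>{0..ctrl_dur (bang_bang p k)}. (q t, w t) \<in> Xfree Cfree)"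
    if "is_traj (ctrl_fun (bang_bang p k)) (ctrl_dur (bang_bang p k)) q w \<and> q 0 = qI \<and> w 0 = 0"
    for q w
  proof -
    have "p 0 \<in> Cfree" using assms(4) by simp
    with that show ?thesis
      using bang_bang_traj[OF assms(6,5), of q w] assms(2,3) unfolding Xfree_def by simp
  qed
  moreover have "\<forall>j\<in>{1..k}. time_optimal_edge (bb_edge (p (j - 1)) (p j)) (p (j - 1)) (p j)"
    using assms(6) bb_edge_time_optimal by blast
  ultimately show ?thesis
    unfolding Let_def using is_traj_exists by blast
qed

end
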